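(* Let $G$ be a graph with vertex order $v_1,\ldots,v_n$, let $D$ be a minimal dominating set of $G$, let $u,w\in D$ be adjacent, let $v\in P_D(u)$, and let $X_{uv}$, $D^*$, $Z_{uv}$ be as in the context (so $D^*=((D\setminus\{u\})\cup X_{uv}\cup\{v\})\setminus Z_{uv}$). Then for every $z\in Z_{uv}$: (1) $z\notin N[X_{uv}\cup\{v\}]$; (2) $z$ has a neighbor in $D^*\setminus(X_{uv}\cup\{v\})$; (3) there is a vertex $x\in N[X_{uv}\cup\{v\}]\setminus N[u]$ adjacent to $z$ with $x\notin N[D^*\setminus(X_{uv}\cup\{v\})]$. Furthermore, for every $x\in N[X_{uv}\cup\{v\}]\setminus N[u]$ with $x\notin N[D^*\setminus(X_{uv}\cup\{v\})]$, there is $z\in Z_{uv}$ adjacent to $x$.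
   Context: Graphs are finite, simple, undirected; $N(x)$ is the open and $N[x]=N(x)\cup\{x\}$ the closed neighborhood, $N[S]=\bigcup_{x\in S}N[x]$. A dominating set is $D\subseteq V(G)$ with $N[D]=V(G)$; it is minimal if no proper subset is dominating. For a dominating set $D$ and $x\in D$, a vertex $y$ is private for $x$ if $y\in N[x]\setminus N[D\setminus\{x\}]$; $P_D[x]$ is the set of such $y$ and $P_D(x)=P_D[x]\cap N(x)$. Fix an order $v_1,\ldots,v_n$ of $V(G)$. Greedy removal from a dominating set $D'$: while the current set $S$ is not a minimal dominating set, remove from $S$ the vertex $v_i$ of smallest index $i$ such that $S\setminus\{v_i\}$ is still dominating. Given $D,u,v$: $X_{uv}$ is built by starting from $\emptyset$ and repeatedly adding the smallest-index vertex of $P_D(u)\setminus N[\{v\}\cup X_{uv}]$ while this set is nonempty. Let $D'=(D\setminus\{u\})\cup X_{uv}\cup\{v\}$, let $D^*$ be the result of greedy removal from $D'$, and $Z_{uv}=D'\setminus D^*$. *)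

theory Defs
  imports Main
begin

definition graph :: "'a set \<Rightarrow> ('a \<Rightarrow> 'a \<Rightarrow> bool) \<Rightarrow> bool" where
  "graph V E \<longleftrightarrow> finite V \<and> (\<forall>x y. E x y \<longrightarrow> x \<in> V \<and> y \<in> V) \<and>
     (\<forall>x y. E x y \<longrightarrow> E y x) \<and> (\<forall>x. \<not> E x x)"

definition nbh :: "'a set \<Rightarrow> ('a \<Rightarrow> 'a \<Rightarrow> bool) \<Rightarrow> 'a \<Rightarrow> 'a set" where
  "nbh V E x = {y \<in> V. E x y}"

definition cnbh :: "'a set \<Rightarrow> ('a \<Rightarrow> 'a \<Rightarrow> bool) \<Rightarrow> 'a \<Rightarrow> 'a set" where
  "cnbh V E x = insert x (nbh V E x)"

definition cnbh_set :: "'a set \<Rightarrow> ('a \<Rightarrow> 'a \<Rightarrow> bool) \<Rightarrow> 'a set \<Rightarrow> 'a set" where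
  "cnbh_set V E S = (\<Union>x\<in>S. cnbh V E x)"

definition dominating :: "'a set \<Rightarrow> ('a \<Rightarrow> 'a \<Rightarrow> bool) \<Rightarrow> 'a set \<Rightarrow> bool" where
  "dominating V E D \<longleftrightarrow> D \<subseteq> V \<and> cnbh_set V E D = V"

definition min_dominating :: "'a set \<Rightarrow> ('a \<Rightarrow> 'a \<Rightarrow> bool) \<Rightarrow> 'a set \<Rightarrow> bool" where
  "min_dominating V E D \<longleftrightarrow> dominating V E D \<and> (\<forall>D'. D' \<subset> D \<longrightarrow> \<not> dominating V E D')"

definition priv_closed :: "'a set \<Rightarrow> ('a \<Rightarrow> 'a \<Rightarrow> bool) \<Rightarrow> 'a set \<Rightarrow> 'a \<Rightarrow> 'a set" where
  "priv_closed V E D x = cnbh V E x - cnbh_set V E (D - {x})"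

definition priv_open :: "'a set \<Rightarrow> ('a \<Rightarrow> 'a \<Rightarrow> bool) \<Rightarrow> 'a set \<Rightarrow> 'a \<Rightarrow> 'a set" where
  "priv_open V E D x = priv_closed V E D x \<inter> nbh V E x"

text \<open>The vertex order is given by an index function idx (injective on V):
  v_i has index idx v_i.  One step of greedy removal.\<close>
definition greedy_step :: "'a set \<Rightarrow> ('a \<Rightarrow> 'a \<Rightarrow> bool) \<Rightarrow> ('a \<Rightarrow> nat) \<Rightarrow> 'a set \<Rightarrow> 'a set" where
  "greedy_step V E idx S =
     (if min_dominating V E S then S
      else S - {ARG_MIN idx y. y \<in> S \<and> dominating V E (S - {y})})"

text \<open>Greedy removal: iterate the step; it removes one vertex per step until a minimal
  dominating set is reached, so card S iterations suffice (afterwards it is a fixpoint).\<close>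
definition greedy_removal :: "'a set \<Rightarrow> ('a \<Rightarrow> 'a \<Rightarrow> bool) \<Rightarrow> ('a \<Rightarrow> nat) \<Rightarrow> 'a set \<Rightarrow> 'a set" where
  "greedy_removal V E idx S = (greedy_step V E idx ^^ card S) S"

definition X_step :: "'a set \<Rightarrow> ('a \<Rightarrow> 'a \<Rightarrow> bool) \<Rightarrow> ('a \<Rightarrow> nat) \<Rightarrow> 'a set \<Rightarrow> 'a \<Rightarrow> 'a \<Rightarrow> 'a set \<Rightarrow> 'a set" where
  "X_step V E idx D u v X =
     (let C = priv_open V E D u - cnbh_set V E ({v} \<union> X) in
      if C = {} then X else insert (ARG_MIN idx y. y \<in> C) X)"

text \<open>Each effective step adds a new vertex of V, so card V iterations reach the final set.\<close>
definition X_uv :: "'a set \<Rightarrow> ('a \<Rightarrow> 'a \<Rightarrow> bool) \<Rightarrow> ('a \<Rightarrow> nat) \<Rightarrow> 'a set \<Rightarrow> 'a \<Rightarrow> 'a \<Rightarrow> 'a set" where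
  "X_uv V E idx D u v = (X_step V E idx D u v ^^ card V) {}"

end

theory Submission
  imports Defs
begin

text \<open>The vertices of X_uv \<union> {v} are private neighbours of u and pairwise non-adjacent, so each
  of them is dominated in D' only by itself; greedy removal therefore never deletes them and
  only deletes vertices z of D - {u}.  Such a z is removed only when D^* still dominates its
  private neighbours with respect to D; these are not dominated by D - {z}, hence are dominated
  by X_uv \<union> {v}, which yields the vertex x of (3).  Conversely, a vertex x near X_uv \<union> {v} but
  not near u is dominated in D by some z \<noteq> u, and if x is not dominated by D^* - (X_uv \<union> {v})
  then z was removed.  The index function is only used to make the choices deterministic.\<close>

lemma cnbh_set_iff: "y \<in> cnbh_set V E S \<longleftrightarrow> (\<exists>x\<in>S. y = x \<or> (y \<in> V \<and> E x y))"
  by (auto simp: cnbh_set_def cnbh_def nbh_def)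

lemma cnbh_set_mono: "A \<subseteq> B \<Longrightarrow> cnbh_set V E A \<subseteq> cnbh_set V E B"
  by (auto simp: cnbh_set_def)

lemma dominating_iff: "S \<subseteq> V \<Longrightarrow> dominating V E S \<longleftrightarrow> V \<subseteq> cnbh_set V E S"
  by (auto simp: dominating_def cnbh_set_iff)

lemma dominating_superset:
  assumes "dominating V E A" "A \<subseteq> B" "B \<subseteq> V"
  shows "dominating V E B"
proof -
  have "V \<subseteq> cnbh_set V E B"
    using assms(1) cnbh_set_mono[OF assms(2), of V E] by (simp add: dominating_def)
  then show ?thesis using assms(3) by (simp add: dominating_iff)
qed

lemma graph_sym: "graph V E \<Longrightarrow> E x y \<Longrightarrow> E y x"
  and graph_irrefl: "graph V E \<Longrightarrow> \<not> E x x"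
  by (auto simp: graph_def)

lemma dominatingE:
  assumes "dominating V E S" "y \<in> V"
  obtains s where "s \<in> S" "y = s \<or> E s y"
proof -
  have "y \<in> cnbh_set V E S" using assms by (simp add: dominating_def)
  then show thesis using that unfolding cnbh_set_iff by blast
qed

lemma priv_open_subset: "priv_open V E D u \<subseteq> V"
  by (auto simp: priv_open_def nbh_def)

lemma priv_open_not_dominated_by_others:
  assumes "y \<in> priv_open V E D u" "d \<in> D" "d \<noteq> u"
  shows "y \<noteq> d \<and> \<not> E d y"
  using assms by (auto simp: priv_open_def priv_closed_def cnbh_set_iff nbh_def)

lemma min_dominating_priv_closed:
  assumes "min_dominating V E D" "z \<in> D"
  obtains p where "p \<in> V" "p \<in> priv_closed V E D z"
proof -
  have D: "dominating V E D" "D \<subseteq> V" using assms(1) by (auto simp: min_dominating_def dominating_def)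
  have "\<not> dominating V E (D - {z})" using assms by (auto simp: min_dominating_def)
  then have "\<not> V \<subseteq> cnbh_set V E (D - {z})" using D(2) dominating_iff[of "D - {z}" V E] by blast
  then obtain p where p: "p \<in> V" "p \<notin> cnbh_set V E (D - {z})" by blast
  moreover have "p \<in> cnbh_set V E D" using D(1) p(1) by (simp add: dominating_def)
  ultimately show thesis
    by (intro that[of p]) (auto simp: priv_closed_def cnbh_set_iff cnbh_def nbh_def)
qed

lemma dominating_replace_by_private_cover:
  assumes G: "graph V E" and D: "dominating V E D"
    and "u \<in> D" "w \<in> D" "E u w"
    and Y: "Y \<subseteq> V" "priv_open V E D u \<subseteq> cnbh_set V E Y"
  shows "dominating V E ((D - {u}) \<union> Y)"
proof -
  have DV: "D \<subseteq> V" using D by (simp add: dominating_def)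
  have "y \<in> cnbh_set V E ((D - {u}) \<union> Y)" if yV: "y \<in> V" for y
  proof -
    obtain d where d: "d \<in> D" "y = d \<or> E d y" using dominatingE[OF D yV] by blast
    consider "d \<noteq> u" | "y = u" | "y \<in> cnbh_set V E (D - {u})"
      | "y \<in> priv_open V E D u"
      using d yV by (auto simp: priv_open_def priv_closed_def cnbh_def nbh_def)
    then show ?thesis
    proof cases
      case 1
      then show ?thesis using d yV by (auto simp: cnbh_set_iff)
    next
      case 2
      then have "w \<in> D - {u}" "E w y"
        using assms(4,5) graph_irrefl[OF G] graph_sym[OF G] by auto
      then show ?thesis using yV by (auto simp: cnbh_set_iff)
    next
      case 3
      then show ?thesis using cnbh_set_mono[of "D - {u}" "(D - {u}) \<union> Y" V E] by auto
    next
      case 4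
      then show ?thesis using Y(2) cnbh_set_mono[of Y "(D - {u}) \<union> Y" V E] by auto
    qed
  qed
  then have "V \<subseteq> cnbh_set V E ((D - {u}) \<union> Y)" by blast
  moreover have "(D - {u}) \<union> Y \<subseteq> V" using DV Y(1) by auto
  ultimately show ?thesis by (simp add: dominating_iff)
qed

section \<open>The set X_uv\<close>

definition independent :: "('a \<Rightarrow> 'a \<Rightarrow> bool) \<Rightarrow> 'a set \<Rightarrow> bool" where
  "independent E S \<longleftrightarrow> (\<forall>a\<in>S. \<forall>b\<in>S. \<not> E a b)"

definition X_invariant :: "'a set \<Rightarrow> ('a \<Rightarrow> 'a \<Rightarrow> bool) \<Rightarrow> 'a set \<Rightarrow> 'a \<Rightarrow> 'a \<Rightarrow> 'a set \<Rightarrow> bool" where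
  "X_invariant V E D u v X \<longleftrightarrow>
     finite X \<and> X \<subseteq> priv_open V E D u \<and> v \<notin> X \<and> independent E (insert v X)"

abbreviation X_saturated :: "'a set \<Rightarrow> ('a \<Rightarrow> 'a \<Rightarrow> bool) \<Rightarrow> 'a set \<Rightarrow> 'a \<Rightarrow> 'a \<Rightarrow> 'a set \<Rightarrow> bool" where
  "X_saturated V E D u v X \<equiv> priv_open V E D u \<subseteq> cnbh_set V E ({v} \<union> X)"

lemma X_step_cases:
  obtains "X_step V E idx D u v X = X" "X_saturated V E D u v X"
  | y where "X_step V E idx D u v X = insert y X" "y \<in> priv_open V E D u"
      "y \<notin> cnbh_set V E ({v} \<union> X)"
proof (cases "X_saturated V E D u v X")
  case True
  then show thesis by (intro that(1)) (auto simp: X_step_def Let_def)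
next
  case False
  define C where "C = priv_open V E D u - cnbh_set V E ({v} \<union> X)"
  obtain k where "k \<in> C" using False C_def by blast
  then have "(ARG_MIN idx y. y \<in> C) \<in> C" by (rule arg_min_nat_lemma[THEN conjunct1])
  moreover have "X_step V E idx D u v X = insert (ARG_MIN idx y. y \<in> C) X"
    using False by (auto simp: X_step_def Let_def C_def)
  ultimately show thesis using that(2) C_def by blast
qed

lemma X_step_invariant:
  assumes G: "graph V E" and inv: "X_invariant V E D u v X"
  shows "X_invariant V E D u v (X_step V E idx D u v X) \<and>
    (X_saturated V E D u v X \<and> X_step V E idx D u v X = X \<or>
     card (X_step V E idx D u v X) = Suc (card X))"
proof (cases rule: X_step_cases[of V E idx D u v X])
  case (2 y)
  have yV: "y \<in> V" using 2(2) priv_open_subset[of V E D u] by blast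
  have far: "a \<noteq> y \<and> \<not> E a y \<and> \<not> E y a" if "a \<in> insert v X" for a
    using 2(3) yV that graph_sym[OF G, of y a] unfolding cnbh_set_iff by blast
  have "y \<notin> X" using far by blast
  then have card: "card (insert y X) = Suc (card X)"
    using inv by (simp add: X_invariant_def)
  have "independent E (insert v (insert y X))"
    using inv far graph_irrefl[OF G] unfolding X_invariant_def independent_def by blast
  then show ?thesis
    using 2(1,2) inv far card by (simp add: X_invariant_def)
qed (use inv in auto)

lemma X_iterate_invariant:
  assumes G: "graph V E"
  shows "X_invariant V E D u v ((X_step V E idx D u v ^^ k) {}) \<and>
    (X_saturated V E D u v ((X_step V E idx D u v ^^ k) {}) \<or>
     k \<le> card ((X_step V E idx D u v ^^ k) {}))"
proof (induction k)
  case 0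
  then show ?case using graph_irrefl[OF G] by (simp add: X_invariant_def independent_def)
next
  case (Suc k)
  define X where "X = (X_step V E idx D u v ^^ k) {}"
  have IH: "X_invariant V E D u v X" "X_saturated V E D u v X \<or> k \<le> card X"
    using Suc X_def by auto
  have "X_step V E idx D u v X = X" if "X_saturated V E D u v X"
    using that by (cases rule: X_step_cases[of V E idx D u v X]) auto
  then show ?case
    using X_step_invariant[OF G IH(1), where idx=idx] IH(2) X_def by auto
qed

lemma X_uv_properties:
  assumes G: "graph V E"
  shows "X_invariant V E D u v (X_uv V E idx D u v) \<and> X_saturated V E D u v (X_uv V E idx D u v)"
proof -
  define X where "X = X_uv V E idx D u v"
  have inv: "X_invariant V E D u v X" "X_saturated V E D u v X \<or> card V \<le> card X"
    using X_iterate_invariant[OF G, where D=D and u=u and v=v and idx=idx and k="card V"] by (auto simp: X_def X_uv_def)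
  have "X \<subseteq> V" using inv(1) priv_open_subset[of V E D u] unfolding X_invariant_def by blast
  moreover have "finite V" using G by (simp add: graph_def)
  ultimately have "X_saturated V E D u v X \<or> X = V" using inv(2) card_seteq by blast
  moreover have "V \<subseteq> cnbh_set V E ({v} \<union> V)" by (auto simp: cnbh_set_iff)
  ultimately have "X_saturated V E D u v X" using priv_open_subset[of V E D u] by blast
  then show ?thesis using inv(1) X_def by simp
qed

section \<open>Greedy removal\<close>

lemma not_min_dominating_removable:
  assumes "dominating V E T" "\<not> min_dominating V E T"
  obtains y where "y \<in> T" "dominating V E (T - {y})"
proof -
  obtain T' where T': "T' \<subset> T" "dominating V E T'"
    using assms by (auto simp: min_dominating_def)
  then obtain y where "y \<in> T" "y \<notin> T'" by blast
  moreover have "T \<subseteq> V" using assms(1) by (simp add: dominating_def)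
  ultimately show thesis
    using that dominating_superset[OF T'(2), of "T - {y}"] T'(1) by blast
qed

text \<open>A vertex k of S with k \<notin> N[S - {k}] can never be deleted: deleting it from any
  T \<subseteq> S would leave it undominated.\<close>

lemma greedy_step_keeps_self_private:
  assumes T: "dominating V E T" "T \<subseteq> S" "K \<subseteq> T"
    and K: "\<forall>k\<in>K. k \<notin> cnbh_set V E (S - {k})"
  shows "dominating V E (greedy_step V E idx T) \<and> K \<subseteq> greedy_step V E idx T \<and>
    greedy_step V E idx T \<subseteq> T"
proof (cases "min_dominating V E T")
  case True
  then show ?thesis using T by (simp add: greedy_step_def)
next
  case False
  define y where "y = (ARG_MIN idx y. y \<in> T \<and> dominating V E (T - {y}))"
  obtain k where "k \<in> T \<and> dominating V E (T - {k})"
    using not_min_dominating_removable[OF T(1) False] by blast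
  then have "y \<in> T \<and> dominating V E (T - {y})"
    unfolding y_def by (rule arg_min_nat_lemma[THEN conjunct1])
  then have y: "y \<in> T" "dominating V E (T - {y})" by auto
  have "y \<in> V" using y(1) T(1) by (auto simp: dominating_def)
  then have "y \<in> cnbh_set V E (T - {y})" using y(2) by (simp add: dominating_def)
  then have "y \<in> cnbh_set V E (S - {y})"
    using cnbh_set_mono[of "T - {y}" "S - {y}" V E] T(2) by blast
  then have "y \<notin> K" using K by blast
  moreover have "greedy_step V E idx T = T - {y}"
    using False by (simp add: greedy_step_def y_def)
  ultimately show ?thesis using y T by auto
qed

lemma greedy_removal_keeps_self_private:
  assumes "dominating V E S" "K \<subseteq> S"
    and "\<forall>k\<in>K. k \<notin> cnbh_set V E (S - {k})"
  shows "dominating V E (greedy_removal V E idx S) \<and> K \<subseteq> greedy_removal V E idx S \<and>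
    greedy_removal V E idx S \<subseteq> S"
proof -
  have "dominating V E ((greedy_step V E idx ^^ n) S) \<and> K \<subseteq> (greedy_step V E idx ^^ n) S \<and>
    (greedy_step V E idx ^^ n) S \<subseteq> S" for n
  proof (induction n)
    case (Suc n)
    define T where "T = (greedy_step V E idx ^^ n) S"
    have "dominating V E T" "T \<subseteq> S" "K \<subseteq> T" using Suc T_def by auto
    then have "dominating V E (greedy_step V E idx T) \<and> K \<subseteq> greedy_step V E idx T \<and>
      greedy_step V E idx T \<subseteq> S"
      using greedy_step_keeps_self_private[OF _ _ _ assms(3), where idx=idx] by blast
    then show ?case by (simp add: T_def)
  qed (use assms in simp)
  then show ?thesis by (simp add: greedy_removal_def)
qed

section \<open>Vertices removed from D - {u}\<close>

context
  fixes V :: "'a set" and E D u Y Ds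
  assumes G: "graph V E" and min_dom: "min_dominating V E D" and u: "u \<in> D"
    and Y_private: "Y \<subseteq> priv_open V E D u"
    and Y_Ds: "Y \<subseteq> Ds" and Ds_sub: "Ds \<subseteq> (D - {u}) \<union> Y"
    and Ds_dom: "dominating V E Ds"
begin

lemma not_near_private:
  assumes "d \<in> D - {u}"
  shows "d \<notin> Y" "d \<notin> cnbh_set V E Y"
proof -
  have "y \<noteq> d \<and> \<not> E y d" if "y \<in> Y" for y
    using priv_open_not_dominated_by_others[of y V E D u d] that assms Y_private
      graph_sym[OF G] by blast
  then show "d \<notin> Y" "d \<notin> cnbh_set V E Y" by (auto simp: cnbh_set_iff)
qed

lemma removed_not_near_private:
  assumes "z \<in> (D - {u}) \<union> Y - Ds"
  shows "z \<in> D - {u}" "z \<notin> cnbh_set V E Y"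
proof -
  show zD: "z \<in> D - {u}" using assms Y_Ds by auto
  show "z \<notin> cnbh_set V E Y" by (rule not_near_private(2)[OF zD])
qed

lemma removed_has_kept_neighbour:
  assumes z: "z \<in> (D - {u}) \<union> Y - Ds"
  shows "\<exists>y\<in>Ds - Y. E z y"
proof -
  have "z \<in> V" using removed_not_near_private(1)[OF z] min_dom
    by (auto simp: min_dominating_def dominating_def)
  then obtain y where "y \<in> Ds" "z = y \<or> E y z"
    using dominatingE[OF Ds_dom] by blast
  moreover have "z \<notin> cnbh_set V E Y" by (rule removed_not_near_private(2)[OF z])
  ultimately show ?thesis using z \<open>z \<in> V\<close> graph_sym[OF G] by (auto simp: cnbh_set_iff)
qed

lemma removed_has_private_witness:
  assumes z: "z \<in> (D - {u}) \<union> Y - Ds"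
  shows "\<exists>x\<in>cnbh_set V E Y - cnbh V E u. E z x \<and> x \<notin> cnbh_set V E (Ds - Y)"
proof -
  have zD: "z \<in> D - {u}" "z \<notin> cnbh_set V E Y" "z \<notin> Ds"
    using removed_not_near_private[OF z] z by auto
  obtain p where p: "p \<in> V" "p \<in> priv_closed V E D z"
    using min_dominating_priv_closed[OF min_dom, of z] zD(1) by blast
  have p_far: "p \<notin> cnbh_set V E (D - {z})" using p(2) by (simp add: priv_closed_def)
  obtain s where s: "s \<in> Ds" "p = s \<or> E s p"
    using dominatingE[OF Ds_dom p(1)] by blast
  have "s \<notin> D - {z}" using s p_far p(1) by (auto simp: cnbh_set_iff)
  then have "s \<in> Y" using s(1) zD(3) Ds_sub by auto
  then have pY: "p \<in> cnbh_set V E Y" using s p(1) by (auto simp: cnbh_set_iff)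
  then have "E z p" using p(2) zD(2) by (auto simp: priv_closed_def cnbh_def nbh_def)
  moreover have "p \<notin> cnbh V E u" using p_far zD(1) u by (auto simp: cnbh_set_iff cnbh_def nbh_def)
  moreover have "p \<notin> cnbh_set V E (Ds - Y)"
    using p_far cnbh_set_mono[of "Ds - Y" "D - {z}" V E] Ds_sub zD(3) by auto
  ultimately show ?thesis using pY by blast
qed

lemma undominated_has_removed_neighbour:
  assumes x: "x \<in> cnbh_set V E Y - cnbh V E u" "x \<notin> cnbh_set V E (Ds - Y)"
  shows "\<exists>z\<in>(D - {u}) \<union> Y - Ds. E x z"
proof -
  have xV: "x \<in> V" using x(1) Y_private priv_open_subset[of V E D u] by (auto simp: cnbh_set_iff)
  obtain d where d: "d \<in> D" "x = d \<or> E d x"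
    using min_dom dominatingE[OF _ xV] by (auto simp: min_dominating_def)
  have "d \<noteq> u" using d x(1) xV by (auto simp: cnbh_def nbh_def)
  then have dY: "d \<notin> Y" "d \<notin> cnbh_set V E Y"
    using not_near_private d(1) by auto
  then have "E d x" using d x(1) by auto
  then have "d \<notin> Ds" using x(2) xV dY(1) by (auto simp: cnbh_set_iff)
  then show ?thesis using d(1) \<open>d \<noteq> u\<close> \<open>E d x\<close> graph_sym[OF G] by auto
qed

end

theorem lemma3:
  fixes V :: "'a set" and E :: "'a \<Rightarrow> 'a \<Rightarrow> bool" and idx :: "'a \<Rightarrow> nat"
    and D :: "'a set" and u w v :: 'a
  assumes "graph V E"
    and "inj_on idx V"
    and "min_dominating V E D"
    and "u \<in> D" and "w \<in> D" and "E u w"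
    and "v \<in> priv_open V E D u"
  shows "let X = X_uv V E idx D u v;
             D' = (D - {u}) \<union> X \<union> {v};
             Ds = greedy_removal V E idx D';
             Z = D' - Ds
         in (\<forall>z\<in>Z.
               z \<notin> cnbh_set V E (X \<union> {v}) \<and>
               (\<exists>y\<in>Ds - (X \<union> {v}). E z y) \<and>
               (\<exists>x\<in>cnbh_set V E (X \<union> {v}) - cnbh V E u.
                  E z x \<and> x \<notin> cnbh_set V E (Ds - (X \<union> {v}))))
          \<and> (\<forall>x\<in>cnbh_set V E (X \<union> {v}) - cnbh V E u.
               x \<notin> cnbh_set V E (Ds - (X \<union> {v})) \<longrightarrow> (\<exists>z\<in>Z. E x z))"
proof -
  note G = assms(1)
  define X where "X = X_uv V E idx D u v"
  define Y where "Y = X \<union> {v}"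
  define Ds where "Ds = greedy_removal V E idx ((D - {u}) \<union> Y)"
  have D: "dominating V E D" using assms(3) by (simp add: min_dominating_def)
  have X: "X_invariant V E D u v X" "X_saturated V E D u v X"
    using X_uv_properties[OF G] X_def by blast+
  have Y_private: "Y \<subseteq> priv_open V E D u"
    using X(1) assms(7) by (simp add: Y_def X_invariant_def)
  have Y_indep: "independent E Y" using X(1) by (simp add: Y_def X_invariant_def)
  have "Y \<subseteq> V" using Y_private priv_open_subset[of V E D u] by blast
  moreover have "priv_open V E D u \<subseteq> cnbh_set V E Y" using X(2) by (simp add: Y_def)
  ultimately have "dominating V E ((D - {u}) \<union> Y)"
    by (rule dominating_replace_by_private_cover[OF G D assms(4-6)])
  moreover have "Y \<subseteq> (D - {u}) \<union> Y" by blast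
  moreover have "\<forall>y\<in>Y. y \<notin> cnbh_set V E ((D - {u}) \<union> Y - {y})"
  proof
    fix y assume y: "y \<in> Y"
    have "y \<noteq> s \<and> \<not> E s y" if s: "s \<in> (D - {u}) \<union> Y - {y}" for s
    proof (cases "s \<in> Y")
      case True
      then show ?thesis using s y Y_indep by (auto simp: independent_def)
    next
      case False
      then show ?thesis
        using s y Y_private priv_open_not_dominated_by_others[of y V E D u s] by auto
    qed
    then show "y \<notin> cnbh_set V E ((D - {u}) \<union> Y - {y})" by (auto simp: cnbh_set_iff)
  qed
  ultimately have "dominating V E Ds \<and> Y \<subseteq> Ds \<and> Ds \<subseteq> (D - {u}) \<union> Y"
    unfolding Ds_def by (rule greedy_removal_keeps_self_private)
  then have Ds: "Y \<subseteq> Ds" "Ds \<subseteq> (D - {u}) \<union> Y" "dominating V E Ds" by auto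
  note removed = removed_not_near_private(2) removed_has_kept_neighbour
    removed_has_private_witness undominated_has_removed_neighbour
  have D'_eq: "(D - {u}) \<union> X \<union> {v} = (D - {u}) \<union> Y" by (auto simp: Y_def)
  show ?thesis
    unfolding Let_def X_def[symmetric] D'_eq Ds_def[symmetric] Y_def[symmetric]
    using removed[OF G assms(3,4) Y_private Ds] by (intro conjI ballI impI) auto
qed

end
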